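(* Let $\Lambda$ be a $k$-graph with no sources, $S$ a left-reversible semigroup and $\eta:\Lambda\to S$ a functor. If the system $(\Lambda,S,\eta)$ is cofinal then $\eta$ is upper dense. If $\eta$ is $S$-primitive for $\Lambda$ and upper dense, then $(\Lambda,S,\eta)$ is cofinal.
   Context: All semigroups are countable, cancellative, with identity. $S$ is left-reversible if $sS\cap tS\ne\emptyset$ for all $s,t\in S$. Write $h\ge_l g$ if $h\in gS$. $t\in S$ is strictly positive if for every $s\in S$ there is $n\ge0$ with $t^n\ge_l s$. A $k$-graph is a countable category $\Lambda$ with a functor $d:\Lambda\to\mathbb{N}^k$ with unique factorisation; $\Lambda^n=d^{-1}(n)$, $\Lambda^0$ = vertices, $uXv=\{\lambda\in X:r(\lambda)=u,s(\lambda)=v\}$; no sources: $v\Lambda^n\ne\emptyset$ for $n\ne0$. The system $(\Lambda,S,\eta)$ is cofinal if for all $v,w\in\Lambda^0$, $a,b\in S$ there is $N\in\mathbb{N}^k$ such that for all $\alpha\in w\Lambda^N$ there is $\beta\in v\Lambda s(\alpha)$ with $a\eta(\beta)=b\eta(\alpha)$. $\eta$ is upper dense if for all $w\in\Lambda^0$ and $a,b\in S$ there is $N\in\mathbb{N}^k$ with $b\eta(\alpha)\ge_l a$ for all $\alpha\in w\Lambda^N$. $\eta$ is $S$-primitive for $\Lambda$ if there is a strictly positive $t\in S$ such that for all $v,w\in\Lambda^0$ and all $s\in S$ with $s\ge_l t$, $v\eta^{-1}(s)w\ne\emptyset$. *)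

theory Defs
  imports Main "HOL-Library.Countable_Set"
begin

definition cancellative_countable_semigroup :: "'s::monoid_mult itself \<Rightarrow> bool" where
  "cancellative_countable_semigroup _ \<longleftrightarrow>
     countable (UNIV :: 's set) \<and>
     (\<forall>a b c :: 's. a * b = a * c \<longrightarrow> b = c) \<and>
     (\<forall>a b c :: 's. b * a = c * a \<longrightarrow> b = c)"

definition left_reversible :: "'s::monoid_mult itself \<Rightarrow> bool" where
  "left_reversible _ \<longleftrightarrow> (\<forall>s t :: 's. \<exists>x y. s * x = t * y)"

definition ge_l :: "'s::monoid_mult \<Rightarrow> 's \<Rightarrow> bool" where
  "ge_l h g \<longleftrightarrow> (\<exists>x. h = g * x)"

definition strictly_positive :: "'s::monoid_mult \<Rightarrow> bool" where
  "strictly_positive t \<longleftrightarrow> (\<forall>s. \<exists>n::nat. ge_l (t ^ n) s)"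

text \<open>A k-graph: a countable category with objects of type 'v, morphisms of type 'm,
  range r, source s, composition cmp (cmp \<mu> \<nu> = \<mu>\<nu>, defined when s \<mu> = r \<nu>),
  identities idm, and a degree functor d into N^k, where N^k is represented
  as functions 'k \<Rightarrow> nat for a finite index type 'k (k = CARD('k)).
  Vertices (objects) are identified with the identity morphisms, i.e. with \<Lambda>^0.\<close>

definition is_kgraph ::
  "('m \<Rightarrow> 'v) \<Rightarrow> ('m \<Rightarrow> 'v) \<Rightarrow> ('m \<Rightarrow> 'm \<Rightarrow> 'm) \<Rightarrow> ('v \<Rightarrow> 'm) \<Rightarrow> ('m \<Rightarrow> ('k::finite \<Rightarrow> nat)) \<Rightarrow> bool"
where
  "is_kgraph r s cmp idm d \<longleftrightarrow>
     countable (UNIV :: 'm set) \<and> countable (UNIV :: 'v set) \<and>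
     (\<forall>v. r (idm v) = v \<and> s (idm v) = v) \<and>
     (\<forall>\<mu> \<nu>. s \<mu> = r \<nu> \<longrightarrow> r (cmp \<mu> \<nu>) = r \<mu> \<and> s (cmp \<mu> \<nu>) = s \<nu>) \<and>
     (\<forall>\<mu>. cmp (idm (r \<mu>)) \<mu> = \<mu> \<and> cmp \<mu> (idm (s \<mu>)) = \<mu>) \<and>
     (\<forall>\<mu> \<nu> \<rho>. s \<mu> = r \<nu> \<longrightarrow> s \<nu> = r \<rho> \<longrightarrow>
        cmp (cmp \<mu> \<nu>) \<rho> = cmp \<mu> (cmp \<nu> \<rho>)) \<and>
     (\<forall>v. d (idm v) = (\<lambda>_. 0)) \<and>
     (\<forall>\<mu> \<nu>. s \<mu> = r \<nu> \<longrightarrow> d (cmp \<mu> \<nu>) = (\<lambda>i. d \<mu> i + d \<nu> i)) \<and>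
     (\<forall>f m n. d f = (\<lambda>i. m i + n i) \<longrightarrow>
        (\<exists>!p. s (fst p) = r (snd p) \<and> d (fst p) = m \<and> d (snd p) = n \<and>
               f = cmp (fst p) (snd p)))"

definition no_sources :: "('m \<Rightarrow> 'v) \<Rightarrow> ('m \<Rightarrow> ('k \<Rightarrow> nat)) \<Rightarrow> bool" where
  "no_sources r d \<longleftrightarrow> (\<forall>v n. n \<noteq> (\<lambda>_. 0) \<longrightarrow> (\<exists>f. r f = v \<and> d f = n))"

definition is_functor_to ::
  "('m \<Rightarrow> 'v) \<Rightarrow> ('m \<Rightarrow> 'v) \<Rightarrow> ('m \<Rightarrow> 'm \<Rightarrow> 'm) \<Rightarrow> ('v \<Rightarrow> 'm) \<Rightarrow> ('m \<Rightarrow> 's::monoid_mult) \<Rightarrow> bool"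
where
  "is_functor_to r s cmp idm \<eta> \<longleftrightarrow>
     (\<forall>v. \<eta> (idm v) = 1) \<and> (\<forall>\<mu> \<nu>. s \<mu> = r \<nu> \<longrightarrow> \<eta> (cmp \<mu> \<nu>) = \<eta> \<mu> * \<eta> \<nu>)"

definition cofinal ::
  "('m \<Rightarrow> 'v) \<Rightarrow> ('m \<Rightarrow> 'v) \<Rightarrow> ('m \<Rightarrow> ('k \<Rightarrow> nat)) \<Rightarrow> ('m \<Rightarrow> 's::monoid_mult) \<Rightarrow> bool"
where
  "cofinal r s d \<eta> \<longleftrightarrow>
     (\<forall>v w a b. \<exists>N. \<forall>\<alpha>. r \<alpha> = w \<and> d \<alpha> = N \<longrightarrow>
        (\<exists>\<beta>. r \<beta> = v \<and> s \<beta> = s \<alpha> \<and> a * \<eta> \<beta> = b * \<eta> \<alpha>))"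

definition upper_dense ::
  "('m \<Rightarrow> 'v) \<Rightarrow> ('m \<Rightarrow> ('k \<Rightarrow> nat)) \<Rightarrow> ('m \<Rightarrow> 's::monoid_mult) \<Rightarrow> bool"
where
  "upper_dense r d \<eta> \<longleftrightarrow>
     (\<forall>w a b. \<exists>N. \<forall>\<alpha>. r \<alpha> = w \<and> d \<alpha> = N \<longrightarrow> ge_l (b * \<eta> \<alpha>) a)"

definition S_primitive ::
  "('m \<Rightarrow> 'v) \<Rightarrow> ('m \<Rightarrow> 'v) \<Rightarrow> ('m \<Rightarrow> 's::monoid_mult) \<Rightarrow> bool"
where
  "S_primitive r s \<eta> \<longleftrightarrow>
     (\<exists>t. strictly_positive t \<and>
        (\<forall>v w x. ge_l x t \<longrightarrow> (\<exists>f. r f = v \<and> s f = w \<and> \<eta> f = x)))"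

end

theory Submission
  imports Defs
begin

text \<open>Cofinality with \<open>v = w\<close> gives \<open>b \<eta>(\<alpha>) = a \<eta>(\<beta>) \<ge>\<^sub>l a\<close>, which is upper density.
  Conversely, upper density applied to \<open>a t\<close> (with \<open>t\<close> the element witnessing
  primitivity) writes \<open>b \<eta>(\<alpha>) = a t x\<close>, and primitivity supplies a path \<open>\<beta>\<close> from \<open>v\<close>
  to \<open>s(\<alpha>)\<close> with \<open>\<eta>(\<beta>) = t x\<close>. Neither direction uses the k-graph axioms, the absence
  of sources, cancellativity, left reversibility or the strict positivity of \<open>t\<close>.\<close>

lemma cofinal_imp_upper_dense:
  fixes \<eta> :: "'m \<Rightarrow> 's::monoid_mult"
  assumes "cofinal r s d \<eta>"
  shows "upper_dense r d \<eta>"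
  unfolding upper_dense_def
proof (intro allI)
  fix w and a b :: 's
  from assms obtain N where N: "\<forall>\<alpha>. r \<alpha> = w \<and> d \<alpha> = N \<longrightarrow>
      (\<exists>\<beta>. r \<beta> = w \<and> s \<beta> = s \<alpha> \<and> a * \<eta> \<beta> = b * \<eta> \<alpha>)"
    unfolding cofinal_def by blast
  then have "\<forall>\<alpha>. r \<alpha> = w \<and> d \<alpha> = N \<longrightarrow> ge_l (b * \<eta> \<alpha>) a"
    unfolding ge_l_def by metis
  then show "\<exists>N. \<forall>\<alpha>. r \<alpha> = w \<and> d \<alpha> = N \<longrightarrow> ge_l (b * \<eta> \<alpha>) a"
    by blast
qed

lemma S_primitive_upper_dense_imp_cofinal:
  fixes \<eta> :: "'m \<Rightarrow> 's::monoid_mult"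
  assumes "S_primitive r s \<eta>" and "upper_dense r d \<eta>"
  shows "cofinal r s d \<eta>"
  unfolding cofinal_def
proof (intro allI)
  fix v w and a b :: 's
  from assms(1) obtain t where t: "\<And>v w x. ge_l x t \<Longrightarrow> \<exists>f. r f = v \<and> s f = w \<and> \<eta> f = x"
    unfolding S_primitive_def by blast
  from assms(2) obtain N where N: "\<forall>\<alpha>. r \<alpha> = w \<and> d \<alpha> = N \<longrightarrow> ge_l (b * \<eta> \<alpha>) (a * t)"
    unfolding upper_dense_def by blast
  have "\<exists>\<beta>. r \<beta> = v \<and> s \<beta> = s \<alpha> \<and> a * \<eta> \<beta> = b * \<eta> \<alpha>"
    if \<alpha>: "r \<alpha> = w \<and> d \<alpha> = N" for \<alpha>
  proof -
    from N \<alpha> obtain x where x: "b * \<eta> \<alpha> = a * (t * x)"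
      unfolding ge_l_def by (auto simp: mult.assoc)
    have "ge_l (t * x) t"
      unfolding ge_l_def by blast
    with t obtain \<beta> where "r \<beta> = v" "s \<beta> = s \<alpha>" "\<eta> \<beta> = t * x"
      by blast
    with x show ?thesis by auto
  qed
  then show "\<exists>N. \<forall>\<alpha>. r \<alpha> = w \<and> d \<alpha> = N \<longrightarrow>
      (\<exists>\<beta>. r \<beta> = v \<and> s \<beta> = s \<alpha> \<and> a * \<eta> \<beta> = b * \<eta> \<alpha>)"
    by blast
qed

theorem proposition5p9:
  fixes r s :: "'m \<Rightarrow> 'v" and cmp :: "'m \<Rightarrow> 'm \<Rightarrow> 'm" and idm :: "'v \<Rightarrow> 'm"
    and d :: "'m \<Rightarrow> ('k::finite \<Rightarrow> nat)" and \<eta> :: "'m \<Rightarrow> 's::monoid_mult"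
  assumes "is_kgraph r s cmp idm d"
    and "no_sources r d"
    and "cancellative_countable_semigroup TYPE('s)"
    and "left_reversible TYPE('s)"
    and "is_functor_to r s cmp idm \<eta>"
  shows "(cofinal r s d \<eta> \<longrightarrow> upper_dense r d \<eta>) \<and>
         (S_primitive r s \<eta> \<and> upper_dense r d \<eta> \<longrightarrow> cofinal r s d \<eta>)"
  using cofinal_imp_upper_dense S_primitive_upper_dense_imp_cofinal by blast

end
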